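(* Let $(\xi_n)_{n\geq1}$ be i.i.d. with $\mathbf{P}(\xi_1=1)=p=1-\mathbf{P}(\xi_1=-1)$, $p\in(0,1)$. For $x\geq1$ set $W_0:=x$, $B_1:=1$, $W_n:=W_{n-1}+\xi_nB_n$, $B_{n+1}:=B_n2^{\xi_n}$ for $n\geq1$, and $f(x,p):=\mathbf{P}(W_n\leq0\text{ for some }n)$. There exist positive constants $C$ and $\beta$ such that for all $p\in(0,1/2)$, $x\geq2$ and $h>0$, $$0<f(x,p)-f(x+h,p)\leq\frac{C}{(1-2p)^2}\left(h^{\beta p^2}+h^{\beta(1-2p)^3}\right).$$ Moreover, for every $p\in(0,1/2)$, $$\lim_{x\to2^+}\frac{\log\big(f(2,p)-f(x,p)\big)}{\log(x-2)}=\log_{1/2}(1-p).$$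
   Context: $f(x,p)$ is the ruin probability of a gambler with initial fortune $x$ who starts by betting $1$, doubles the bet after each win and halves it after each loss, winning each round independently with probability $p$. *)

theory Defs
  imports "HOL-Probability.Probability"
begin

text \<open>Outcome stream: omega !! (n-1) = True means xi_n = 1 (a win), False means xi_n = -1.
  wb x omega n = (W_n, B_{n+1}).\<close>
fun wb :: "real \<Rightarrow> bool stream \<Rightarrow> nat \<Rightarrow> real \<times> real" where
  "wb x \<omega> 0 = (x, 1)"
| "wb x \<omega> (Suc n) = (let (w, b) = wb x \<omega> n in
      if \<omega> !! n then (w + b, 2 * b) else (w - b, b / 2))"

definition W :: "real \<Rightarrow> bool stream \<Rightarrow> nat \<Rightarrow> real" where
  "W x \<omega> n = fst (wb x \<omega> n)"

definition coins :: "real \<Rightarrow> bool stream measure" where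
  "coins p = stream_space (measure_pmf (bernoulli_pmf p))"

definition ruin :: "real \<Rightarrow> real \<Rightarrow> real" where
  "ruin x p = measure (coins p) {\<omega> \<in> space (coins p). \<exists>n. W x \<omega> n \<le> 0}"

end

theory Submission
  imports Defs
begin

(* In terms of the distance s = x - 2 to the critical capital, the survival probability
   G s = 1 - f (2 + s, p) solves G s = (1-p) G (2 s) + p G ((s - 1)/2), vanishes for s < 0
   (from x <= 2 ruin is certain, by a contraction argument on the first-step equation) and is
   not identically 0 (an exponential Lyapunov function shows that ruin is not certain far
   away).

   Hoelder bound: iterating the equation twice expresses a sum of increments of length l of G
   at l-separated points of the lattice 2 4^-j Z by four sums of the same kind.  The quantity
   u = l 4^j is preserved, except that on the coarsest lattice the two middle branches merge
   into one sum on a finer lattice, which multiplies u by 4.  The modulus min 1 ((2 u)^g) with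
   4^g = 1 + p absorbs exactly this loss, and the error of the trivial bound contracts
   geometrically, so G (s + h) - G s <= min 1 ((2 h)^g).

   Strict monotonicity: by the equation, the increment of G over [c, c + L] dominates
   p (1-p) times the increment over [c - 1, c - 1 + L]; for L >= 2 this propagates positivity
   from c < 0 to all c, and dilating by 2^k reduces short intervals to long ones.

   Logarithmic asymptotics: for 0 < s <= 1, G s = (1-p)^k G (2^k s) with 2^k s in (1/2, 1],
   so G s is comparable to (1-p)^(log_2 (1/s)) = s^(log_(1/2) (1-p)). *)

section \<open>The first-step equation\<close>

lemma W_shift: "W (x + h) \<omega> n = W x \<omega> n + h"
proof -
  have "wb (x + h) \<omega> n = (fst (wb x \<omega> n) + h, snd (wb x \<omega> n))"
    by (induction n) (auto simp: Let_def split: prod.splits)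
  then show ?thesis by (simp add: W_def)
qed

lemma wb_Cons_Suc:
  "wb x (c ## \<omega>) (Suc n) =
     (let l = (if c then 2 else 1/2 :: real); x' = (if c then (x+1)/2 else 2*x-2)
      in (l * fst (wb x' \<omega> n), l * snd (wb x' \<omega> n)))"
proof (induction n)
  case 0
  then show ?case by (auto simp: field_simps)
next
  case (Suc n)
  define x' where "x' = (if c then (x+1)/2 else 2*x-2)"
  obtain w b where wb: "wb x' \<omega> n = (w, b)" by fastforce
  have "wb x (c ## \<omega>) (Suc (Suc n)) = (let (w, b) = wb x (c ## \<omega>) (Suc n) in
      if \<omega> !! n then (w + b, 2 * b) else (w - b, b / 2))" by simp
  also have "\<dots> = (let l = (if c then 2 else 1/2 :: real) in
      if \<omega> !! n then (l*w + l*b, 2 * (l*b)) else (l*w - l*b, (l*b) / 2))"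
    using Suc wb by (simp add: Let_def x'_def)
  also have "\<dots> = (let l = (if c then 2 else 1/2 :: real) in
      (l * fst (wb x' \<omega> (Suc n)), l * snd (wb x' \<omega> (Suc n))))"
    using wb by (auto simp: Let_def algebra_simps)
  finally show ?case by (simp add: x'_def Let_def)
qed

lemma W_Cons_Suc:
  "W x (c ## \<omega>) (Suc n) = (if c then 2 else 1/2) * W (if c then (x+1)/2 else 2*x-2) \<omega> n"
  unfolding W_def wb_Cons_Suc by (simp add: Let_def)

lemma W_stake: "W x \<omega> n = W x (stake n \<omega> @- sconst False) n"
proof -
  have "wb x \<omega> n = wb x \<omega>' n" if "\<forall>i<n. \<omega> !! i = \<omega>' !! i" for \<omega>'
    using that by (induction n) (auto simp: Let_def)
  moreover have "\<forall>i<n. \<omega> !! i = (stake n \<omega> @- sconst False) !! i"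
    by (simp add: shift_snth_less)
  ultimately show ?thesis unfolding W_def by metis
qed

lemma sets_coins: "sets (coins p) = sets (stream_space (count_space UNIV))"
  unfolding coins_def by (rule sets_stream_space_cong) simp

lemma measurable_W_le[measurable]: "Measurable.pred (coins p) (\<lambda>\<omega>. W x \<omega> n \<le> 0)"
proof -
  have "(\<lambda>\<omega>. W x (stake n \<omega> @- sconst False) n \<le> 0)
      \<in> measurable (stream_space (count_space UNIV)) (count_space UNIV)"
    by (rule measurable_compose[OF measurable_stake]) simp
  then show ?thesis
    by (subst W_stake) (simp add: measurable_cong_sets[OF sets_coins refl])
qed

lemma prob_space_coins: "prob_space (coins p)"
  unfolding coins_def by (rule prob_space.prob_space_stream_space) (rule prob_space_measure_pmf)

lemma space_coins: "space (coins p) = UNIV"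
  by (simp add: coins_def space_stream_space streams_UNIV)

definition ruin_by :: "real \<Rightarrow> real \<Rightarrow> nat \<Rightarrow> real" where
  "ruin_by x p N = measure (coins p) {\<omega> \<in> space (coins p). \<exists>n\<le>N. W x \<omega> n \<le> 0}"

lemma ruin_by_0: "ruin_by x p 0 = (if x \<le> 0 then 1 else 0)"
proof -
  interpret prob_space "coins p" by (rule prob_space_coins)
  show ?thesis unfolding ruin_by_def by (simp add: W_def prob_space)
qed

lemma ruin_by_nonneg: "0 \<le> ruin_by x p N"
  by (simp add: ruin_by_def)

lemma ruin_bounds: "0 \<le> ruin x p" "ruin x p \<le> 1"
proof -
  interpret prob_space "coins p" by (rule prob_space_coins)
  show "0 \<le> ruin x p" "ruin x p \<le> 1" unfolding ruin_def by auto
qed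

lemma LIMSEQ_ruin_by: "(\<lambda>N. ruin_by x p N) \<longlonglongrightarrow> ruin x p"
proof -
  interpret prob_space "coins p" by (rule prob_space_coins)
  have "(\<lambda>N. measure (coins p) {\<omega> \<in> space (coins p). \<exists>n\<le>N. W x \<omega> n \<le> 0}) \<longlonglongrightarrow>
     measure (coins p) (\<Union>N. {\<omega> \<in> space (coins p). \<exists>n\<le>N. W x \<omega> n \<le> 0})"
    by (rule finite_Lim_measure_incseq) (auto simp: incseq_def, metis le_trans)
  moreover have "(\<Union>N. {\<omega> \<in> space (coins p). \<exists>n\<le>N. W x \<omega> n \<le> 0})
      = {\<omega> \<in> space (coins p). \<exists>n. W x \<omega> n \<le> 0}"
    by auto
  ultimately show ?thesis unfolding ruin_by_def ruin_def by simp
qed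

lemma ruin_antimono: "x \<le> y \<Longrightarrow> ruin y p \<le> ruin x p"
proof -
  assume "x \<le> y"
  interpret prob_space "coins p" by (rule prob_space_coins)
  have "W x \<omega> n \<le> W y \<omega> n" for \<omega> n
    using W_shift[of x "y - x" \<omega> n] \<open>x \<le> y\<close> by simp
  then have "{\<omega> \<in> space (coins p). \<exists>n. W y \<omega> n \<le> 0} \<subseteq> {\<omega> \<in> space (coins p). \<exists>n. W x \<omega> n \<le> 0}"
    by (auto intro: order_trans)
  then show ?thesis unfolding ruin_def by (intro finite_measure_mono) auto
qed

lemma ruin_nonpos: "x \<le> 0 \<Longrightarrow> ruin x p = 1"
proof -
  assume "x \<le> 0"
  interpret prob_space "coins p" by (rule prob_space_coins)
  have "W x \<omega> 0 \<le> 0" for \<omega>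
    using \<open>x \<le> 0\<close> by (simp add: W_def)
  then have "{\<omega> \<in> space (coins p). \<exists>n. W x \<omega> n \<le> 0} = space (coins p)"
    by blast
  then show ?thesis unfolding ruin_def by (simp add: prob_space)
qed

lemma ruin_by_Cons_event:
  assumes "0 < x"
  shows "{\<omega> \<in> space (coins p). \<exists>n\<le>Suc N. W x (c ## \<omega>) n \<le> 0}
       = {\<omega> \<in> space (coins p). \<exists>n\<le>N. W (if c then (x+1)/2 else 2*x-2) \<omega> n \<le> 0}"
proof -
  have "(\<exists>n\<le>Suc N. W x (c ## \<omega>) n \<le> 0) \<longleftrightarrow> (\<exists>n\<le>N. W x (c ## \<omega>) (Suc n) \<le> 0)" for \<omega>
  proof
    assume "\<exists>n\<le>Suc N. W x (c ## \<omega>) n \<le> 0"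
    then obtain n where "n \<le> Suc N" "W x (c ## \<omega>) n \<le> 0" by blast
    then show "\<exists>n\<le>N. W x (c ## \<omega>) (Suc n) \<le> 0"
      using assms by (cases n) (auto simp: W_def)
  qed auto
  then show ?thesis
    by (auto simp: space_coins W_Cons_Suc mult_le_0_iff)
qed

lemma ruin_by_Suc:
  assumes p: "0 < p" "p < 1"
  shows "ruin_by x p (Suc N) =
    (if x \<le> 0 then 1 else p * ruin_by ((x+1)/2) p N + (1-p) * ruin_by (2*x-2) p N)"
proof (cases "x \<le> 0")
  case True
  interpret prob_space "coins p" by (rule prob_space_coins)
  have "{\<omega> \<in> space (coins p). \<exists>n\<le>Suc N. W x \<omega> n \<le> 0} = space (coins p)"
    using True by (force simp: W_def)
  then show ?thesis using True unfolding ruin_by_def by (simp add: prob_space)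
next
  case False
  interpret prob_space "coins p" by (rule prob_space_coins)
  let ?X = "{\<omega> \<in> space (coins p). \<exists>n\<le>Suc N. W x \<omega> n \<le> 0}"
  have "ennreal (ruin_by x p (Suc N)) = emeasure (coins p) ?X"
    unfolding ruin_by_def by (simp add: emeasure_eq_measure)
  also have "\<dots> = (\<integral>\<^sup>+c. emeasure (coins p) {\<omega> \<in> space (coins p). c ## \<omega> \<in> ?X}
                      \<partial>measure_pmf (bernoulli_pmf p))"
    unfolding coins_def
    by (rule prob_space.emeasure_stream_space[OF prob_space_measure_pmf])
      (simp add: coins_def[symmetric])
  also have "\<dots> = (\<integral>\<^sup>+c. ennreal (ruin_by (if c then (x+1)/2 else 2*x-2) p N)
                      \<partial>measure_pmf (bernoulli_pmf p))"
    using ruin_by_Cons_event[of x p N] False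
    by (simp add: ruin_by_def emeasure_eq_measure space_coins)
  also have "\<dots> = ennreal (ruin_by ((x+1)/2) p N) * p + ennreal (ruin_by (2*x-2) p N) * (1 - p)"
    using p by simp
  also have "\<dots> = ennreal (p * ruin_by ((x+1)/2) p N + (1-p) * ruin_by (2*x-2) p N)"
    using p ruin_by_nonneg by (simp add: ennreal_mult' ennreal_plus mult.commute)
  finally show ?thesis using False p ruin_by_nonneg
    by (subst (asm) ennreal_inj) (auto intro!: add_nonneg_nonneg mult_nonneg_nonneg)
qed

lemma ruin_first_step:
  assumes x: "0 < x" and p: "0 < p" "p < 1"
  shows "ruin x p = p * ruin ((x+1)/2) p + (1-p) * ruin (2*x-2) p"
proof -
  have "(\<lambda>N. ruin_by x p (Suc N)) \<longlonglongrightarrow> ruin x p"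
    using LIMSEQ_ruin_by by (rule LIMSEQ_Suc)
  moreover have "(\<lambda>N. ruin_by x p (Suc N)) \<longlonglongrightarrow> p * ruin ((x+1)/2) p + (1-p) * ruin (2*x-2) p"
    unfolding ruin_by_Suc[OF p] using x by (simp, intro tendsto_intros LIMSEQ_ruin_by)
  ultimately show ?thesis using LIMSEQ_unique by blast
qed

section \<open>Ruin is certain below 2 but not everywhere\<close>

lemma le_0_if_contracting:
  fixes g :: "'a \<Rightarrow> real"
  assumes maps: "\<And>y. y \<in> A \<Longrightarrow> \<phi> y \<in> A"
    and contracting: "\<And>y. y \<in> A \<Longrightarrow> g y \<le> c * g (\<phi> y)"
    and le_1: "\<And>y. y \<in> A \<Longrightarrow> g y \<le> 1"
    and c: "0 \<le> c" "c < 1" and y: "y \<in> A"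
  shows "g y \<le> 0"
proof -
  have le_power: "g y \<le> c ^ k" if "y \<in> A" for y k
    using that
  proof (induction k arbitrary: y)
    case 0
    then show ?case using le_1 by simp
  next
    case (Suc k)
    have "g y \<le> c * g (\<phi> y)" using contracting[OF Suc.prems] .
    also have "\<dots> \<le> c * c ^ k" using Suc.IH[OF maps[OF Suc.prems]] c by (intro mult_left_mono)
    finally show ?case by simp
  qed
  have "(\<lambda>k. c ^ k) \<longlonglongrightarrow> 0" using c by (intro LIMSEQ_power_zero) simp
  then show ?thesis by (rule LIMSEQ_le_const) (use le_power y in auto)
qed

lemma ruin_eq_1_if_le_2:
  assumes p: "0 < p" "p < 1" and x: "x \<le> 2"
  shows "ruin x p = 1"
proof -
  define g where "g y = 1 - ruin y p" for y
  have g_bounds: "0 \<le> g y" "g y \<le> 1" for y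
    unfolding g_def using ruin_bounds[of y p] by auto
  have g_nonpos: "y \<le> 0 \<Longrightarrow> g y = 0" for y
    unfolding g_def using ruin_nonpos by simp
  have g_eq: "0 < y \<Longrightarrow> g y = p * g ((y+1)/2) + (1-p) * g (2*y-2)" for y
    unfolding g_def using ruin_first_step[of y p] p by (simp add: algebra_simps)
  have vanishes: "g y = 0" if "y \<in> A" "\<And>y. y \<in> A \<Longrightarrow> \<phi> y \<in> A"
      "\<And>y. y \<in> A \<Longrightarrow> g y \<le> c * g (\<phi> y)" "0 \<le> c" "c < 1" for A \<phi> c y
  proof -
    have "g y \<le> 0" by (rule le_0_if_contracting[of A \<phi>]) (use that g_bounds in auto)
    then show ?thesis using g_bounds(1)[of y] by simp
  qed
  have below_1: "g y = 0" if "y < 1" for y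
  proof (cases "y \<le> 0")
    case False
    show ?thesis
    proof (rule vanishes[of y "{0<..<1}" "\<lambda>y. (y+1)/2" p])
      show "g y \<le> p * g ((y+1)/2)" if "y \<in> {0<..<1}" for y
        using that g_eq[of y] g_nonpos[of "2*y-2"] by simp
    qed (use False that p in auto)
  qed (rule g_nonpos)
  have below_3_2: "g y = 0" if "y < 3/2" for y
  proof (cases "y < 1")
    case False
    show ?thesis
    proof (rule vanishes[of y "{1..<3/2}" "\<lambda>y. (y+1)/2" p])
      show "g y \<le> p * g ((y+1)/2)" if "y \<in> {1..<3/2}" for y
        using that g_eq[of y] below_1[of "2*y-2"] by simp
    qed (use False that p in auto)
  qed (rule below_1)
  have below_2: "g y = 0" if "y < 2" for y
  proof (cases "y < 1")
    case False
    show ?thesis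
    proof (rule vanishes[of y "{1..<2}" "\<lambda>y. if y < 3/2 then y else 2*y-2" "1-p"])
      show "g y \<le> (1-p) * g (if y < 3/2 then y else 2*y-2)" if "y \<in> {1..<2}" for y
      proof (cases "y < 3/2")
        case True
        then show ?thesis using below_3_2 by simp
      next
        case False
        then show ?thesis using that g_eq[of y] below_3_2[of "(y+1)/2"] by simp
      qed
    qed (use False that p in auto)
  qed (rule below_1)
  have "g 2 = (1-p) * g 2"
    using g_eq[of 2] below_2[of "3/2"] by simp
  then have "g 2 = 0" using p by (simp add: algebra_simps)
  then have "g x = 0" using below_2[of x] x by (cases "x < 2") auto
  then show ?thesis unfolding g_def by simp
qed

lemma ruin_le_supersolution:
  assumes p: "0 < p" "p < 1"
    and V_nonneg: "\<And>x. 0 \<le> V x" and V_ruined: "\<And>x. x \<le> 0 \<Longrightarrow> 1 \<le> V x"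
    and V_super: "\<And>x. 0 < x \<Longrightarrow> p * V ((x+1)/2) + (1-p) * V (2*x-2) \<le> V x"
  shows "ruin x p \<le> V x"
proof -
  have "ruin_by x p N \<le> V x" for N
  proof (induction N arbitrary: x)
    case 0
    then show ?case using V_nonneg V_ruined by (simp add: ruin_by_0)
  next
    case (Suc N)
    show ?case
    proof (cases "x \<le> 0")
      case False
      have "ruin_by x p (Suc N) = p * ruin_by ((x+1)/2) p N + (1-p) * ruin_by (2*x-2) p N"
        using False by (simp add: ruin_by_Suc[OF p])
      also have "\<dots> \<le> p * V ((x+1)/2) + (1-p) * V (2*x-2)"
        using Suc.IH p by (intro add_mono mult_left_mono) auto
      also have "\<dots> \<le> V x" using False by (intro V_super) simp
      finally show ?thesis .
    qed (simp add: ruin_by_Suc[OF p] V_ruined)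
  qed
  then show ?thesis by (intro LIMSEQ_le_const2[OF LIMSEQ_ruin_by]) auto
qed

text \<open>In the variable \<open>y = x - 1\<close> a win maps \<open>y\<close> to \<open>y/2\<close> and a loss maps it to
  \<open>2y - 1\<close>, which is at least \<open>e\<^sup>\<delta> y\<close> for large \<open>y\<close> when \<open>\<delta> < ln 2\<close>.  Hence \<open>(R/y)\<^sup>\<theta>\<close> is a
  supersolution for large \<open>y\<close> as soon as the exponential moment below is less than 1, which
  holds for small \<open>\<theta>\<close> since its derivative at 0, the drift \<open>p ln 2 - (1-p) \<delta>\<close>, is negative
  for \<open>p < 1/2\<close>.\<close>

lemma exists_contracting_exponent:
  fixes p :: real
  assumes p: "0 < p" "p < 1/2"
  shows "\<exists>\<theta>>0. p * exp (\<theta> * ln 2) + (1-p) * exp (- (\<theta> * (ln 2 / (2*(1-p))))) < 1"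
proof -
  define \<delta> where "\<delta> = ln 2 / (2*(1-p))"
  define F where "F \<theta> = p * exp (\<theta> * ln 2) + (1-p) * exp (- (\<theta> * \<delta>))" for \<theta> :: real
  have D: "(F has_real_derivative (p * ln 2 - (1-p) * \<delta>)) (at 0)"
    unfolding F_def by (auto intro!: derivative_eq_intros)
  have "(1-p) * \<delta> = ln 2 / 2" unfolding \<delta>_def using p by (simp add: field_simps)
  moreover have "p * ln 2 < (1/2) * ln 2" using p by (intro mult_strict_right_mono) auto
  ultimately have neg: "p * ln 2 - (1-p) * \<delta> < 0" by linarith
  obtain d where d: "d > 0" "\<forall>h>0. h < d \<longrightarrow> F 0 > F (0 + h)"
    using DERIV_neg_dec_right[OF D neg] by blast
  have "F (d/2) < F 0" using d by simp
  moreover have "F 0 = 1" unfolding F_def by simp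
  ultimately show ?thesis using d unfolding F_def \<delta>_def by (intro exI[of _ "d/2"]) auto
qed

definition tail_bound :: "real \<Rightarrow> real \<Rightarrow> real \<Rightarrow> real" where
  "tail_bound R \<theta> y = (if R \<le> y then exp (\<theta> * (ln R - ln y)) else 1)"

lemma tail_bound_nonneg: "0 \<le> tail_bound R \<theta> y"
  unfolding tail_bound_def by simp

lemma tail_bound_le_1: "0 < R \<Longrightarrow> 0 \<le> \<theta> \<Longrightarrow> tail_bound R \<theta> y \<le> 1"
  unfolding tail_bound_def by (auto simp: mult_nonneg_nonpos)

lemma tail_bound_le_exp:
  "0 < z \<Longrightarrow> 0 < R \<Longrightarrow> 0 \<le> \<theta> \<Longrightarrow> tail_bound R \<theta> z \<le> exp (\<theta> * (ln R - ln z))"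
  unfolding tail_bound_def by (auto simp: not_le intro!: mult_nonneg_nonneg less_imp_le)

lemma tail_bound_supersolution:
  fixes p :: real
  defines "\<delta> \<equiv> ln 2 / (2*(1-p))"
  assumes p: "0 < p" "p < 1/2" and \<theta>: "0 < \<theta>"
    and tilt: "p * exp (\<theta> * ln 2) + (1-p) * exp (- (\<theta> * \<delta>)) < 1"
    and R: "1 \<le> R" "1 / (2 - exp \<delta>) \<le> R"
    and y: "-1 < y"
  shows "p * tail_bound R \<theta> (y/2) + (1-p) * tail_bound R \<theta> (2*y-1) \<le> tail_bound R \<theta> y"
proof (cases "R \<le> y")
  case False
  have "p * tail_bound R \<theta> (y/2) + (1-p) * tail_bound R \<theta> (2*y-1) \<le> p * 1 + (1-p) * 1"
    using tail_bound_le_1[of R \<theta>] R \<theta> p by (intro add_mono mult_left_mono) auto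
  then show ?thesis using False unfolding tail_bound_def by simp
next
  case True
  have "\<delta> < ln 2" unfolding \<delta>_def using p by (simp add: field_simps)
  then have "exp \<delta> < 2" by (metis exp_less_cancel_iff exp_ln zero_less_numeral)
  have y1: "1 \<le> y" "0 < R" using True R by auto
  define E where "E = exp (\<theta> * (ln R - ln y))"
  have win: "tail_bound R \<theta> (y/2) \<le> exp (\<theta> * ln 2) * E"
  proof -
    have "tail_bound R \<theta> (y/2) \<le> exp (\<theta> * (ln R - ln (y/2)))"
      using y1 \<theta> by (intro tail_bound_le_exp) auto
    also have "\<theta> * (ln R - ln (y/2)) = \<theta> * ln 2 + \<theta> * (ln R - ln y)"
      using y1 by (simp add: ln_div algebra_simps)
    finally show ?thesis unfolding E_def by (simp add: exp_add)
  qed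
  have loss: "tail_bound R \<theta> (2*y-1) \<le> exp (- (\<theta> * \<delta>)) * E"
  proof -
    have "1 / (2 - exp \<delta>) \<le> y" using R True by simp
    then have "1 \<le> y * (2 - exp \<delta>)" using \<open>exp \<delta> < 2\<close> by (simp add: divide_le_eq)
    then have "exp \<delta> * y \<le> 2*y - 1" by (simp add: algebra_simps)
    moreover have "0 < exp \<delta> * y" using y1 by simp
    ultimately have "ln (exp \<delta> * y) \<le> ln (2*y-1)" by simp
    then have shift: "\<delta> + ln y \<le> ln (2*y-1)" using y1 by (simp add: ln_mult)
    have "tail_bound R \<theta> (2*y-1) \<le> exp (\<theta> * (ln R - ln (2*y-1)))"
      using y1 \<theta> by (intro tail_bound_le_exp) auto
    also have "\<dots> \<le> exp (\<theta> * (ln R - ln y - \<delta>))"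
      using shift \<theta> by (simp add: mult_left_mono)
    also have "\<dots> = exp (- (\<theta> * \<delta>)) * E"
      unfolding E_def by (simp add: exp_add[symmetric] algebra_simps)
    finally show ?thesis .
  qed
  have "p * tail_bound R \<theta> (y/2) + (1-p) * tail_bound R \<theta> (2*y-1)
      \<le> p * (exp (\<theta> * ln 2) * E) + (1-p) * (exp (- (\<theta> * \<delta>)) * E)"
    using win loss p by (intro add_mono mult_left_mono) auto
  also have "\<dots> = (p * exp (\<theta> * ln 2) + (1-p) * exp (- (\<theta> * \<delta>))) * E"
    by (simp add: algebra_simps)
  also have "\<dots> \<le> 1 * E" using tilt by (intro mult_right_mono) (auto simp: E_def)
  finally show ?thesis unfolding E_def tail_bound_def using True by simp
qed

lemma ruin_less_1_somewhere:
  fixes p :: real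
  assumes p: "0 < p" "p < 1/2"
  shows "\<exists>x. ruin x p < 1"
proof -
  obtain \<theta> where \<theta>: "0 < \<theta>"
    and tilt: "p * exp (\<theta> * ln 2) + (1-p) * exp (- (\<theta> * (ln 2 / (2*(1-p))))) < 1"
    using exists_contracting_exponent[OF p] by blast
  define R where "R = max 1 (1 / (2 - exp (ln 2 / (2*(1-p)))))"
  have R: "1 \<le> R" "1 / (2 - exp (ln 2 / (2*(1-p)))) \<le> R" unfolding R_def by auto
  have "ruin x p \<le> tail_bound R \<theta> (x - 1)" for x
  proof (rule ruin_le_supersolution)
    show "p * tail_bound R \<theta> ((x+1)/2 - 1) + (1-p) * tail_bound R \<theta> (2*x-2 - 1)
        \<le> tail_bound R \<theta> (x - 1)" if "0 < x" for x
      using tail_bound_supersolution[OF p \<theta> tilt R, of "x - 1"] that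
      by (simp add: field_simps)
  qed (use p R in \<open>auto simp: tail_bound_def tail_bound_nonneg\<close>)
  from this[of "1 + 2*R"] have "ruin (1 + 2*R) p \<le> exp (- (\<theta> * ln 2))"
    using R by (simp add: tail_bound_def ln_mult algebra_simps)
  also have "\<dots> < 1" using \<theta> by simp
  finally show ?thesis by blast
qed

section \<open>Solutions of the survival equation\<close>

lemma exists_dyadic_rescaling:
  fixes s :: real
  assumes "0 < s" "s \<le> 1"
  shows "\<exists>k. 1/2 < 2^k * s \<and> 2^k * s \<le> 1"
proof -
  define k where "k = nat \<lfloor>log 2 (1/s)\<rfloor>"
  have "0 \<le> log 2 (1/s)" using assms by simp
  then have k: "real k \<le> log 2 (1/s)" "log 2 (1/s) < real k + 1"
    unfolding k_def by linarith+
  have "2 powr real k \<le> 1/s" "1/s < 2 powr (real k + 1)"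
    using k assms by (simp_all add: le_log_iff log_less_iff)
  then have "2^k \<le> 1/s" "1/s < 2 * 2^k"
    by (simp_all add: powr_realpow powr_add)
  then show ?thesis using assms by (intro exI[of _ k]) (simp add: field_simps)
qed

lemma tendsto_const_over_ln_at_right_0: "((\<lambda>s. C / ln s) \<longlongrightarrow> 0) (at_right (0::real))"
proof -
  have "filterlim ln at_infinity (at_right (0::real))"
    using ln_at_0 at_bot_le_at_infinity filterlim_mono by blast
  then show ?thesis by (intro tendsto_divide_0[OF tendsto_const])
qed

locale survival_fun =
  fixes G :: "real \<Rightarrow> real" and p :: real
  assumes p_pos: "0 < p" and p_less_1: "p < 1"
    and mono_G: "mono G"
    and nonneg: "\<And>s. 0 \<le> G s" and le_1: "\<And>s. G s \<le> 1"
    and vanish_neg: "\<And>s. s < 0 \<Longrightarrow> G s = 0"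
    and functional_eq: "\<And>s. G s = (1-p) * G (2 * s) + p * G ((s-1)/2)"
begin

lemma increment_ge_doubled: "a \<le> b \<Longrightarrow> (1-p) * (G (2*b) - G (2*a)) \<le> G b - G a"
  and increment_ge_halved: "a \<le> b \<Longrightarrow> p * (G ((b-1)/2) - G ((a-1)/2)) \<le> G b - G a"
proof -
  assume "a \<le> b"
  have "G b - G a = (1-p) * (G (2*b) - G (2*a)) + p * (G ((b-1)/2) - G ((a-1)/2))"
    using functional_eq[of a] functional_eq[of b] by (simp add: algebra_simps)
  moreover have "G (2*a) \<le> G (2*b)" "G ((a-1)/2) \<le> G ((b-1)/2)"
    using \<open>a \<le> b\<close> by (auto intro: monoD[OF mono_G])
  ultimately show "(1-p) * (G (2*b) - G (2*a)) \<le> G b - G a"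
    and "p * (G ((b-1)/2) - G ((a-1)/2)) \<le> G b - G a"
    using p_pos p_less_1 by simp_all
qed

lemma increment_ge_dilated:
  "a \<le> b \<Longrightarrow> (1-p)^k * (G (2^k*b) - G (2^k*a)) \<le> G b - G a"
proof (induction k arbitrary: a b)
  case (Suc k)
  have "(1-p) * ((1-p)^k * (G (2^k*(2*b)) - G (2^k*(2*a)))) \<le> (1-p) * (G (2*b) - G (2*a))"
    using Suc p_less_1 by (intro mult_left_mono) auto
  also have "\<dots> \<le> G b - G a" by (rule increment_ge_doubled[OF Suc.prems])
  finally show ?case by (simp add: mult.assoc mult.left_commute)
qed simp

lemma G_eq_dilated: "0 < s \<Longrightarrow> 2^k * s \<le> 1 \<Longrightarrow> G s = (1-p)^k * G (2^k * s)"
proof (induction k arbitrary: s)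
  case (Suc k)
  have "1 \<le> (2::real)^k" by simp
  then have "2 * s \<le> 2^Suc k * s" using Suc.prems(1) by (simp add: mult_right_mono)
  then have "s \<le> 1/2" using Suc.prems(2) by linarith
  then have "G s = (1-p) * G (2 * s)" using functional_eq[of s] vanish_neg[of "(s-1)/2"] by simp
  also have "G (2 * s) = (1-p)^k * G (2^k * (2 * s))"
    using Suc by (simp add: mult.assoc mult.commute)
  finally show ?case by (simp add: mult.assoc mult.commute)
qed simp

lemma G_ge_dilated: "(1-p)^k * G (2^k * s) \<le> G s"
proof (induction k arbitrary: s)
  case (Suc k)
  have "(1-p) * ((1-p)^k * G (2^k * (2 * s))) \<le> (1-p) * G (2 * s)"
    using Suc p_less_1 by (intro mult_left_mono) auto
  also have "\<dots> \<le> G s"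
    using functional_eq[of s] nonneg[of "(s-1)/2"] p_pos by simp
  finally show ?case by (simp add: mult.assoc mult.left_commute)
qed simp

lemma pos_if_pos_somewhere:
  assumes "0 < G S" "0 < s"
  shows "0 < G s"
proof -
  obtain k where "S / s < 2^k" using real_arch_pow[of 2 "S/s"] by auto
  then have "G S \<le> G (2^k * s)" using \<open>0 < s\<close> by (intro monoD[OF mono_G]) (simp add: field_simps)
  then have "0 < (1-p)^k * G (2^k * s)" using assms p_less_1 by simp
  also have "\<dots> \<le> G s" by (rule G_ge_dilated)
  finally show ?thesis .
qed

lemma increment_pos_if_long:
  assumes "0 < G S" "2 \<le> L" "-1 \<le> c"
  shows "G c < G (c + L)"
proof -
  obtain n where "c < real n" using reals_Archimedean2 by blast
  then show ?thesis using \<open>-1 \<le> c\<close>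
  proof (induction n arbitrary: c)
    case 0
    then show ?case using pos_if_pos_somewhere[OF \<open>0 < G S\<close>, of "c + L"] vanish_neg[of c] \<open>2 \<le> L\<close>
      by simp
  next
    case (Suc n)
    show ?case
    proof (cases "c < 0")
      case True
      then show ?thesis
        using pos_if_pos_somewhere[OF \<open>0 < G S\<close>, of "c + L"] vanish_neg[of c] \<open>2 \<le> L\<close> Suc.prems
        by simp
    next
      case False
      have "0 < (1-p) * (G (c + L - 1) - G (c - 1))"
        using Suc.IH[of "c - 1"] Suc.prems False p_less_1 by (simp add: diff_add_eq)
      also have "\<dots> \<le> G ((c + L - 1)/2) - G ((c - 1)/2)"
        using increment_ge_doubled[of "(c - 1)/2" "(c + L - 1)/2"] \<open>2 \<le> L\<close>
        by (simp add: add_divide_distrib diff_divide_distrib)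
      finally have "0 < p * (G ((c + L - 1)/2) - G ((c - 1)/2))" using p_pos by simp
      also have "\<dots> \<le> G (c + L) - G c"
        using increment_ge_halved[of c "c + L"] \<open>2 \<le> L\<close> by simp
      finally show ?thesis by simp
    qed
  qed
qed

lemma strict_mono_if_pos_somewhere:
  assumes "0 < G S" "0 \<le> a" "0 < h"
  shows "G a < G (a + h)"
proof -
  obtain k where "2 / h < 2^k" using real_arch_pow[of 2 "2/h"] by auto
  then have "2 \<le> 2^k * h" using \<open>0 < h\<close> by (simp add: field_simps)
  moreover have "-1 \<le> 2^k * a" using \<open>0 \<le> a\<close> by (simp add: order_trans[of _ 0])
  ultimately have "0 < G (2^k * a + 2^k * h) - G (2^k * a)"
    using increment_pos_if_long[OF \<open>0 < G S\<close>, of "2^k * h" "2^k * a"] \<open>0 \<le> a\<close> by simp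
  then have "0 < (1-p)^k * (G (2^k * (a + h)) - G (2^k * a))"
    using p_less_1 by (simp add: distrib_left)
  also have "\<dots> \<le> G (a + h) - G a" using \<open>0 < h\<close> by (intro increment_ge_dilated) simp
  finally show ?thesis by simp
qed

lemma ln_G_over_ln_bounds:
  assumes c: "0 < G (1/2)" and s: "0 < s" "s < 1/2"
  shows "- ln (1-p) / ln 2 - ln (1-p) / ln s \<le> ln (G s) / ln s"
    and "ln (G s) / ln s \<le> - ln (1-p) / ln 2 + ln (G (1/2)) / ln s"
proof -
  obtain k where k: "1/2 < 2^k * s" "2^k * s \<le> 1"
    using exists_dyadic_rescaling[of s] s by auto
  define g where "g = G (2^k * s)"
  have g: "G (1/2) \<le> g" "g \<le> 1" unfolding g_def using monoD[OF mono_G] k(1) le_1 by auto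
  have "G s = (1-p)^k * g" unfolding g_def using G_eq_dilated k(2) s by simp
  then have split: "ln (G s) / ln s = real k * (ln (1-p) / ln s) + ln g / ln s"
    using p_less_1 g c by (simp add: ln_mult ln_realpow add_divide_distrib)
  have "ln (2^k * s) \<le> 0" "ln (1/2) < ln (2^k * s)"
    using k s by simp_all
  then have "real k * ln 2 + ln s \<le> 0" "- ln 2 < real k * ln 2 + ln s"
    using s by (simp_all add: ln_mult ln_realpow ln_div)
  then have k_bounds: "- ln s / ln 2 - 1 \<le> real k" "real k \<le> - ln s / ln 2"
    by (simp_all add: field_simps)
  have ratio_pos: "0 < ln (1-p) / ln s" using p_pos p_less_1 s by (simp add: divide_neg_neg)
  have "(- ln s / ln 2 - 1) * (ln (1-p) / ln s) \<le> real k * (ln (1-p) / ln s)"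
    "real k * (ln (1-p) / ln s) \<le> (- ln s / ln 2) * (ln (1-p) / ln s)"
    using mult_right_mono[OF k_bounds(1) less_imp_le[OF ratio_pos]]
      mult_right_mono[OF k_bounds(2) less_imp_le[OF ratio_pos]] by simp_all
  moreover have "ln s < 0" using s by simp
  then have "(- ln s / ln 2 - 1) * (ln (1-p) / ln s) = - ln (1-p) / ln 2 - ln (1-p) / ln s"
    "(- ln s / ln 2) * (ln (1-p) / ln s) = - ln (1-p) / ln 2"
    by (simp_all add: field_simps)
  moreover have "0 \<le> ln g / ln s" "ln g / ln s \<le> ln (G (1/2)) / ln s"
    using g c s by (simp_all add: divide_nonpos_neg divide_right_mono_neg)
  ultimately show "- ln (1-p) / ln 2 - ln (1-p) / ln s \<le> ln (G s) / ln s"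
    and "ln (G s) / ln s \<le> - ln (1-p) / ln 2 + ln (G (1/2)) / ln s"
    unfolding split by linarith+
qed

lemma tendsto_ln_G_over_ln:
  assumes "0 < G (1/2)"
  shows "((\<lambda>s. ln (G s) / ln s) \<longlongrightarrow> log (1/2) (1-p)) (at_right 0)"
proof (rule tendsto_sandwich)
  have "eventually (\<lambda>s. 0 < s \<and> s < 1/2) (at_right (0::real))"
    by (simp add: eventually_at_right_field) (auto intro: exI[of _ "1/2"])
  then show "eventually (\<lambda>s. - ln (1-p) / ln 2 - ln (1-p) / ln s \<le> ln (G s) / ln s) (at_right 0)"
    and "eventually (\<lambda>s. ln (G s) / ln s \<le> - ln (1-p) / ln 2 + ln (G (1/2)) / ln s) (at_right 0)"
    using ln_G_over_ln_bounds[OF assms] by (auto elim!: eventually_mono)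
  have log_eq: "log (1/2) (1-p) = - ln (1-p) / ln 2" by (simp add: log_def ln_div)
  show "((\<lambda>s. - ln (1-p) / ln 2 - ln (1-p) / ln s) \<longlongrightarrow> log (1/2) (1-p)) (at_right 0)"
    unfolding log_eq
    using tendsto_diff[OF tendsto_const[of "- ln (1-p) / ln 2"]
        tendsto_const_over_ln_at_right_0[of "ln (1-p)"]] by simp
  show "((\<lambda>s. - ln (1-p) / ln 2 + ln (G (1/2)) / ln s) \<longlongrightarrow> log (1/2) (1-p)) (at_right 0)"
    unfolding log_eq
    using tendsto_add[OF tendsto_const[of "- ln (1-p) / ln 2"]
        tendsto_const_over_ln_at_right_0[of "ln (G (1/2))"]] by simp
qed

end

section \<open>Increment sums on dyadic lattices\<close>

definition incr_sum :: "(real \<Rightarrow> real) \<Rightarrow> real set \<Rightarrow> real \<Rightarrow> real \<Rightarrow> real" where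
  "incr_sum G T s l = (\<Sum>t\<in>T. G (s + t + l) - G (s + t))"

definition lattice :: "nat \<Rightarrow> real set" where
  "lattice j = {2 / 4^j * of_int k | k. True}"

definition separated :: "real set \<Rightarrow> real \<Rightarrow> bool" where
  "separated T l \<longleftrightarrow> (\<forall>a\<in>T. \<forall>b\<in>T. a \<noteq> b \<longrightarrow> l \<le> \<bar>a - b\<bar>)"

lemma incr_sum_le_span:
  assumes "mono G" "finite T" "T \<noteq> {}" "separated T l"
  shows "incr_sum G T s l \<le> G (s + Max T + l) - G (s + Min T)"
  using assms(2-4)
proof (induction T rule: finite_linorder_max_induct)
  case (insert b A)
  show ?case
  proof (cases "A = {}")
    case True
    then show ?thesis by (simp add: incr_sum_def)
  next
    case False
    have "Max A \<in> A" "Max A < b" using False insert by auto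
    then have "Max A + l \<le> b"
      using insert.prems(2) unfolding separated_def by fastforce
    have max: "Max (insert b A) = b"
      using insert.hyps(1) False \<open>Max A < b\<close> by simp
    have min: "Min (insert b A) = Min A"
      using insert.hyps(1) False \<open>Max A < b\<close> Min_le[OF insert.hyps(1) \<open>Max A \<in> A\<close>] by simp
    have "separated A l" using insert.prems(2) unfolding separated_def by blast
    moreover have "b \<notin> A" using insert.hyps(2) by auto
    ultimately have "incr_sum G (insert b A) s l
        \<le> (G (s + b + l) - G (s + b)) + (G (s + Max A + l) - G (s + Min A))"
      using insert False unfolding incr_sum_def by simp
    also have "\<dots> \<le> G (s + b + l) - G (s + Min A)"
      using monoD[OF \<open>mono G\<close>, of "s + Max A + l" "s + b"] \<open>Max A + l \<le> b\<close> by simp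
    finally show ?thesis unfolding max min .
  qed
qed simp

lemma incr_sum_le_1:
  assumes "mono G" "\<And>x. 0 \<le> G x" "\<And>x. G x \<le> 1" "finite T" "separated T l"
  shows "incr_sum G T s l \<le> 1"
proof (cases "T = {}")
  case False
  then have "incr_sum G T s l \<le> G (s + Max T + l) - G (s + Min T)"
    using incr_sum_le_span assms by blast
  then show ?thesis using assms(2)[of "s + Min T"] assms(3)[of "s + Max T + l"] by linarith
qed (simp add: incr_sum_def)

lemma incr_sum_image:
  "inj_on f T \<Longrightarrow> incr_sum G (f ` T) s l = (\<Sum>t\<in>T. G (s + f t + l) - G (s + f t))"
  unfolding incr_sum_def by (simp add: sum.reindex)

lemma incr_sum_shift_half:
  "incr_sum G T (s - 1) l = incr_sum G ((\<lambda>t. t - 1/2) ` T) (s - 1/2) l"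
  by (subst incr_sum_image) (auto simp: inj_on_def incr_sum_def algebra_simps)

lemma incr_sum_union:
  "finite A \<Longrightarrow> finite B \<Longrightarrow> A \<inter> B = {} \<Longrightarrow>
    incr_sum G (A \<union> B) s l = incr_sum G A s l + incr_sum G B s l"
  unfolding incr_sum_def by (rule sum.union_disjoint)

lemma lattice_times_4: "T \<subseteq> lattice (Suc j) \<Longrightarrow> (\<lambda>t. 4 * t) ` T \<subseteq> lattice j"
  unfolding lattice_def by auto

lemma lattice_0_times_4: "T \<subseteq> lattice 0 \<Longrightarrow> (\<lambda>t. 4 * t) ` T \<subseteq> lattice 0"
proof
  fix x assume "T \<subseteq> lattice 0" "x \<in> (\<lambda>t. 4 * t) ` T"
  then obtain k where "x = 2 / 4^0 * of_int (4 * k)" unfolding lattice_def by auto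
  then show "x \<in> lattice 0" unfolding lattice_def by blast
qed

lemma lattice_div_4: "T \<subseteq> lattice j \<Longrightarrow> (\<lambda>t. t / 4) ` T \<subseteq> lattice (Suc j)"
  unfolding lattice_def by auto

lemma lattice_0_dist_shift_half:
  assumes "a \<in> lattice 0" "b \<in> lattice 0"
  shows "1/2 \<le> \<bar>a - (b - 1/2)\<bar>"
proof -
  obtain k m where "a = 2 * of_int k" "b = 2 * of_int m" using assms unfolding lattice_def by auto
  then have eq: "a - (b - 1/2) = of_int (4 * (k - m) + 1) / 2" by simp
  have "\<bar>a - (b - 1/2)\<bar> = \<bar>of_int (4 * (k - m) + 1) :: real\<bar> / 2" unfolding eq by simp
  moreover have "4 * (k - m) + 1 \<noteq> 0" by presburger
  then have "1 \<le> \<bar>of_int (4 * (k - m) + 1) :: real\<bar>" by linarith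
  ultimately show ?thesis by simp
qed

lemma lattice_0_union_shift_half:
  "T \<subseteq> lattice 0 \<Longrightarrow> T \<union> (\<lambda>t. t - 1/2) ` T \<subseteq> lattice 1"
proof
  fix x assume T: "T \<subseteq> lattice 0" and x: "x \<in> T \<union> (\<lambda>t. t - 1/2) ` T"
  then obtain k where "x = 2 * of_int k \<or> x = 2 * of_int k - 1/2" unfolding lattice_def by auto
  then have "x = 2 / 4^1 * of_int (4 * k) \<or> x = 2 / 4^1 * of_int (4 * k - 1)" by auto
  then show "x \<in> lattice 1" unfolding lattice_def by blast
qed

lemma lattice_0_disjoint_shift_half: "T \<subseteq> lattice 0 \<Longrightarrow> T \<inter> (\<lambda>t. t - 1/2) ` T = {}"
  using lattice_0_dist_shift_half by fastforce

lemma separated_scale: "separated T l \<Longrightarrow> 0 < c \<Longrightarrow> separated ((\<lambda>t. c * t) ` T) (c * l)"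
  unfolding separated_def by (auto simp: abs_mult right_diff_distrib[symmetric])

lemma separated_div_4: "separated T l \<Longrightarrow> separated ((\<lambda>t. t / 4) ` T) (l / 4)"
  unfolding separated_def by (auto simp: diff_divide_distrib[symmetric])

lemma separated_union_shift_half:
  assumes "separated T l" "T \<subseteq> lattice 0" "l \<le> 1/2"
  shows "separated (T \<union> (\<lambda>t. t - 1/2) ` T) l"
  unfolding separated_def
proof (intro ballI impI)
  fix a b assume a: "a \<in> T \<union> (\<lambda>t. t - 1/2) ` T" and b: "b \<in> T \<union> (\<lambda>t. t - 1/2) ` T"
    and "a \<noteq> b"
  have cross: "l \<le> \<bar>a' - (b' - 1/2)\<bar>" if "a' \<in> T" "b' \<in> T" for a' b'
  proof -
    have "1/2 \<le> \<bar>a' - (b' - 1/2)\<bar>" using that assms(2) by (intro lattice_0_dist_shift_half) auto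
    then show ?thesis using assms(3) by linarith
  qed
  show "l \<le> \<bar>a - b\<bar>"
    using a b \<open>a \<noteq> b\<close> assms(1) cross cross[of b a] unfolding separated_def
    by (auto simp: abs_minus_commute)
qed

section \<open>Hoelder continuity of solutions\<close>

definition modulus :: "real \<Rightarrow> real \<Rightarrow> real" where
  "modulus p u = min 1 ((2*u) powr log 4 (1+p))"

lemma modulus_nonneg: "0 \<le> modulus p u"
  unfolding modulus_def by simp

lemma modulus_le_1: "modulus p u \<le> 1"
  unfolding modulus_def by simp

lemma modulus_le_powr: "modulus p u \<le> (2*u) powr log 4 (1+p)"
  unfolding modulus_def by simp

lemma modulus_eq_1: "0 < p \<Longrightarrow> 1/2 \<le> u \<Longrightarrow> modulus p u = 1"
  unfolding modulus_def using ge_one_powr_ge_zero[of "2*u" "log 4 (1+p)"] by simp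

lemma modulus_times_4:
  assumes "0 < p" "0 < u" "u \<le> 1/2"
  shows "modulus p (4*u) \<le> (1+p) * modulus p u"
proof -
  have "(2*u) powr log 4 (1+p) \<le> 1 powr log 4 (1+p)"
    using assms by (intro powr_mono2) auto
  then have "modulus p u = (2*u) powr log 4 (1+p)" unfolding modulus_def by simp
  moreover have "(2*(4*u)) powr log 4 (1+p) = 4 powr log 4 (1+p) * (2*u) powr log 4 (1+p)"
    by (subst powr_mult[symmetric]) (simp_all add: mult.commute mult.left_commute)
  ultimately show ?thesis using modulus_le_powr[of p "4*u"] assms(1) by simp
qed

text \<open>The exponent \<open>log 4 (1+p)\<close> is chosen so that the modulus is a supersolution of
  the two-step equation when the two middle branches are merged.\<close>

lemma modulus_supersolution:
  assumes "0 < p" "p < 1" "0 < u" "u \<le> 1/2"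
  shows "(1-p)^2 * modulus p (4*u) + p*(1-p) * modulus p (4*u) + p^2 * modulus p u \<le> modulus p u"
proof -
  have "(1-p)^2 * modulus p (4*u) + p*(1-p) * modulus p (4*u) = (1-p) * modulus p (4*u)"
    by (simp add: algebra_simps power2_eq_square)
  also have "\<dots> \<le> (1-p) * ((1+p) * modulus p u)"
    using modulus_times_4[of p u] assms by (intro mult_left_mono) auto
  finally show ?thesis by (simp add: algebra_simps power2_eq_square)
qed

lemma modulus_le_powr_square:
  assumes p: "0 < p" "p \<le> 1/2" and h: "0 < h"
  shows "modulus p h \<le> 2 * h powr (p^2/2)"
proof (cases "1 \<le> h")
  case True
  then show ?thesis using modulus_le_1[of p h] ge_one_powr_ge_zero[of h "p^2/2"] by simp
next
  case False
  have "p^2 * ln 2 \<le> p^2 * 1" using ln_2_less_1 by (intro mult_left_mono) auto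
  also have "\<dots> \<le> p - p^2"
    using mult_left_mono[of "2*p" 1 p] p by (simp add: power2_eq_square)
  also have "\<dots> \<le> ln (1 + p)" using p by (intro ln_one_plus_pos_lower_bound) auto
  finally have exponent_lower: "p^2/2 \<le> log 4 (1+p)"
    using ln_mult[of 2 2] by (simp add: log_def pos_le_divide_eq)
  have exponent_upper: "log 4 (1+p) \<le> 1"
    using p log_le_cancel_iff[of 4 "1+p" 4] by simp
  have "modulus p h \<le> 2 powr log 4 (1+p) * h powr log 4 (1+p)"
    using modulus_le_powr[of p h] h by (simp add: powr_mult)
  also have "\<dots> \<le> 2 * h powr (p^2/2)"
    using exponent_lower exponent_upper h False
    by (intro mult_mono powr_mono' order.trans[OF powr_mono[OF exponent_upper]]) auto
  finally show ?thesis .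
qed

text \<open>In the bound \<open>incr_bound p n j l\<close> for increment sums on \<open>lattice j\<close>, the error
  weight \<open>odds p ^ j\<close> makes the branches of weight \<open>(1-p)\<^sup>2\<close> (one level coarser) and \<open>p\<^sup>2\<close>
  (one level finer) contribute like the two middle ones, and \<open>holder_rate p\<close> is the largest
  contraction factor of the error in the three cases of the induction step below.\<close>

definition odds :: "real \<Rightarrow> real" where
  "odds p = (1-p) / p"

definition holder_rate :: "real \<Rightarrow> real" where
  "holder_rate p = max (4*p*(1-p)) (max ((1-p)^2/2 + p*(1-p)) ((1-p)^2/4 + 3*p*(1-p)))"

definition incr_bound :: "real \<Rightarrow> nat \<Rightarrow> nat \<Rightarrow> real \<Rightarrow> real" where
  "incr_bound p n j l = modulus p (l * 4^j) + holder_rate p ^ n * (odds p ^ j / (2 * (l * 4^j)))"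

lemma holder_rate_ge:
  "4*p*(1-p) \<le> holder_rate p"
  "(1-p)^2/2 + p*(1-p) \<le> holder_rate p"
  "(1-p)^2/4 + 3*p*(1-p) \<le> holder_rate p"
  unfolding holder_rate_def by (meson max.cobounded1 max.cobounded2 max.coboundedI2)+

lemma holder_rate_nonneg: "0 < p \<Longrightarrow> p < 1 \<Longrightarrow> 0 \<le> holder_rate p"
  using holder_rate_ge(1)[of p] mult_nonneg_nonneg[of "4*p" "1-p"] by linarith

lemma holder_rate_less_1:
  assumes "0 < p" "p < 1/2"
  shows "holder_rate p < 1"
proof -
  have "0 < (1 - 2*p)^2" using assms by simp
  then have a: "4*p*(1-p) < 1" by (simp add: power2_eq_square algebra_simps)
  have "(1-p)^2/2 + p*(1-p) = (1 - p^2)/2" by (simp add: power2_eq_square field_simps)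
  also have "\<dots> < 1" by (simp add: field_simps add_pos_nonneg)
  finally have b: "(1-p)^2/2 + p*(1-p) < 1" .
  have "(1-p)^2 < 1^2" using assms by (intro power_strict_mono) auto
  then have c: "(1-p)^2/4 + 3*p*(1-p) < 1" using a by simp
  show ?thesis using a b c unfolding holder_rate_def by (simp only: max_less_iff_conj)
qed

lemma odds_ge_1: "0 < p \<Longrightarrow> p \<le> 1/2 \<Longrightarrow> 1 \<le> odds p"
  unfolding odds_def by simp

lemma incr_bound_0_ge_1:
  assumes "0 < p" "p \<le> 1/2" "0 < l"
  shows "1 \<le> incr_bound p 0 j l"
proof (cases "1/2 \<le> l * 4^j")
  case True
  then show ?thesis
    using modulus_eq_1 assms odds_ge_1[of p] by (simp add: incr_bound_def)
next
  case False
  have "1 \<le> odds p ^ j" using odds_ge_1[of p] assms by simp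
  then have "1 \<le> odds p ^ j / (2 * (l * 4^j))" using False assms by (simp add: le_divide_eq)
  then show ?thesis using modulus_nonneg[of p "l * 4^j"] by (simp add: incr_bound_def)
qed

context survival_fun
begin

lemma G_two_step:
  "G y = (1-p)^2 * G (4*y) + p*(1-p) * G (y - 1/2) + p*(1-p) * G (y - 1) + p^2 * G ((y-3)/4)"
proof -
  have args: "2*(2*y) = 4*y" "(2*y - 1)/2 = y - 1/2" "2*((y-1)/2) = y - 1"
      "((y-1)/2 - 1)/2 = (y-3)/4"
    by (simp_all add: field_simps)
  have "G y = (1-p) * G (2*y) + p * G ((y-1)/2)" by (rule functional_eq)
  also have "G (2*y) = (1-p) * G (4*y) + p * G (y - 1/2)"
    using functional_eq[of "2*y"] by (simp only: args)
  also have "G ((y-1)/2) = (1-p) * G (y - 1) + p * G ((y-3)/4)"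
    using functional_eq[of "(y-1)/2"] by (simp only: args)
  finally show ?thesis by (simp add: algebra_simps power2_eq_square)
qed

lemma incr_sum_two_step:
  assumes "finite T"
  shows "incr_sum G T s l = (1-p)^2 * incr_sum G ((\<lambda>t. 4*t) ` T) (4 * s) (4*l)
     + p*(1-p) * incr_sum G T (s - 1/2) l + p*(1-p) * incr_sum G T (s - 1) l
     + p^2 * incr_sum G ((\<lambda>t. t/4) ` T) ((s-3)/4) (l/4)"
proof -
  have inj: "inj_on (\<lambda>t::real. 4*t) T" "inj_on (\<lambda>t::real. t/4) T" by (auto simp: inj_on_def)
  have "G (s + t + l) - G (s + t) =
      (1-p)^2 * (G (4 * s + 4*t + 4*l) - G (4 * s + 4*t))
      + p*(1-p) * (G (s - 1/2 + t + l) - G (s - 1/2 + t))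
      + p*(1-p) * (G (s - 1 + t + l) - G (s - 1 + t))
      + p^2 * (G ((s-3)/4 + t/4 + l/4) - G ((s-3)/4 + t/4))" for t
    using G_two_step[of "s+t+l"] G_two_step[of "s+t"]
    by (simp add: algebra_simps add_divide_distrib diff_divide_distrib)
  then show ?thesis unfolding incr_sum_image[OF inj(1)] incr_sum_image[OF inj(2)]
    by (simp add: incr_sum_def sum.distrib sum_distrib_left)
qed

lemma incr_sum_bound_step_Suc_level:
  assumes IH: "\<And>j T s l. 0 < l \<Longrightarrow> finite T \<Longrightarrow> T \<subseteq> lattice j \<Longrightarrow> separated T l \<Longrightarrow>
      incr_sum G T s l \<le> incr_bound p n j l"
    and l: "0 < l" and T: "finite T" "T \<subseteq> lattice (Suc j)" "separated T l"
  shows "incr_sum G T s l \<le> incr_bound p (Suc n) (Suc j) l"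
proof -
  define u where "u = l * 4^Suc j"
  define K where "K = holder_rate p ^ n"
  define r where "r = odds p"
  have "0 < u" "0 < r" using l p_pos p_less_1 by (simp_all add: u_def r_def odds_def)
  have scale: "4*l * 4^j = u" "l/4 * 4^Suc (Suc j) = u" by (simp_all add: u_def)
  have coarse: "incr_sum G ((\<lambda>t. 4*t) ` T) (4 * s) (4*l) \<le> modulus p u + K * (r^j / (2*u))"
    using IH[of "4*l" "(\<lambda>t. 4*t) ` T" j "4 * s"] l T lattice_times_4 separated_scale[OF T(3), of 4]
    by (simp add: incr_bound_def scale K_def r_def)
  have same: "incr_sum G T s' l \<le> modulus p u + K * (r^Suc j / (2*u))" for s'
    using IH[of l T "Suc j" s'] l T by (simp add: incr_bound_def u_def K_def r_def)
  have finer: "incr_sum G ((\<lambda>t. t/4) ` T) ((s-3)/4) (l/4)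
      \<le> modulus p u + K * (r^Suc (Suc j) / (2*u))"
    using IH[of "l/4" "(\<lambda>t. t/4) ` T" "Suc (Suc j)" "(s-3)/4"] l T lattice_div_4 separated_div_4
    unfolding incr_bound_def scale by (simp add: K_def r_def)
  have "incr_sum G T s l = (1-p)^2 * incr_sum G ((\<lambda>t. 4*t) ` T) (4 * s) (4*l)
     + p*(1-p) * incr_sum G T (s - 1/2) l + p*(1-p) * incr_sum G T (s - 1) l
     + p^2 * incr_sum G ((\<lambda>t. t/4) ` T) ((s-3)/4) (l/4)"
    by (rule incr_sum_two_step[OF T(1)])
  also have "\<dots> \<le> (1-p)^2 * (modulus p u + K * (r^j / (2*u)))
        + p*(1-p) * (modulus p u + K * (r^Suc j / (2*u)))
        + p*(1-p) * (modulus p u + K * (r^Suc j / (2*u)))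
        + p^2 * (modulus p u + K * (r^Suc (Suc j) / (2*u)))"
    using coarse same finer p_pos p_less_1 by (intro add_mono mult_left_mono) auto
  also have "\<dots> = modulus p u + K * (4*p*(1-p) * (r^Suc j / (2*u)))"
    using \<open>0 < u\<close> p_pos unfolding r_def odds_def by (simp add: field_simps power2_eq_square)
  also have "\<dots> \<le> modulus p u + K * (holder_rate p * (r^Suc j / (2*u)))"
  proof -
    have "0 \<le> r^Suc j / (2*u)" using \<open>0 < u\<close> \<open>0 < r\<close> by simp
    then have "4*p*(1-p) * (r^Suc j / (2*u)) \<le> holder_rate p * (r^Suc j / (2*u))"
      by (rule mult_right_mono[OF holder_rate_ge(1)])
    then show ?thesis using holder_rate_nonneg[OF p_pos p_less_1]
      by (intro add_left_mono mult_left_mono) (simp_all add: K_def)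
  qed
  finally show ?thesis by (simp add: incr_bound_def u_def K_def r_def mult_ac)
qed

lemma incr_sum_bound_step_level_0_short:
  assumes IH: "\<And>j T s l. 0 < l \<Longrightarrow> finite T \<Longrightarrow> T \<subseteq> lattice j \<Longrightarrow> separated T l \<Longrightarrow>
      incr_sum G T s l \<le> incr_bound p n j l"
    and l: "0 < l" "l \<le> 1/2" and T: "finite T" "T \<subseteq> lattice 0" "separated T l"
  shows "incr_sum G T s l \<le> incr_bound p (Suc n) 0 l"
proof -
  define K where "K = holder_rate p ^ n"
  define r where "r = odds p"
  define T' where "T' = T \<union> (\<lambda>t. t - 1/2) ` T"
  have coarse: "incr_sum G ((\<lambda>t. 4*t) ` T) (4 * s) (4*l) \<le> modulus p (4*l) + K * (1 / (2*(4*l)))"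
    using IH[of "4*l" "(\<lambda>t. 4*t) ` T" 0 "4 * s"] l T lattice_0_times_4 separated_scale[OF T(3), of 4]
    by (simp add: incr_bound_def K_def)
  have merged: "incr_sum G T' (s - 1/2) l \<le> modulus p (4*l) + K * (r / (2*(4*l)))"
    using IH[of l T' 1 "s - 1/2"] l T lattice_0_union_shift_half separated_union_shift_half
    by (simp add: incr_bound_def K_def r_def T'_def mult.commute)
  have finer: "incr_sum G ((\<lambda>t. t/4) ` T) ((s-3)/4) (l/4) \<le> modulus p l + K * (r / (2*l))"
    using IH[of "l/4" "(\<lambda>t. t/4) ` T" 1 "(s-3)/4"] l T lattice_div_4 separated_div_4
    by (simp add: incr_bound_def K_def r_def)
  have "incr_sum G T' (s - 1/2) l = incr_sum G T (s - 1/2) l + incr_sum G T (s - 1) l"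
    unfolding incr_sum_shift_half[of G T s l] T'_def
    by (rule incr_sum_union[OF T(1) finite_imageI[OF T(1)] lattice_0_disjoint_shift_half[OF T(2)]])
  then have "incr_sum G T s l = (1-p)^2 * incr_sum G ((\<lambda>t. 4*t) ` T) (4 * s) (4*l)
      + p*(1-p) * incr_sum G T' (s - 1/2) l + p^2 * incr_sum G ((\<lambda>t. t/4) ` T) ((s-3)/4) (l/4)"
    using incr_sum_two_step[OF T(1), of s l] by (simp add: algebra_simps)
  also have "\<dots> \<le> (1-p)^2 * (modulus p (4*l) + K * (1 / (2*(4*l))))
      + p*(1-p) * (modulus p (4*l) + K * (r / (2*(4*l)))) + p^2 * (modulus p l + K * (r / (2*l)))"
    using coarse merged finer p_pos p_less_1 by (intro add_mono mult_left_mono) auto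
  also have "\<dots> = ((1-p)^2 * modulus p (4*l) + p*(1-p) * modulus p (4*l) + p^2 * modulus p l)
      + K * (((1-p)^2/2 + p*(1-p)) / (2*l))"
    using l p_pos unfolding r_def odds_def by (simp add: field_simps power2_eq_square)
  also have "\<dots> \<le> modulus p l + K * (holder_rate p / (2*l))"
    using modulus_supersolution[OF p_pos p_less_1 l] holder_rate_nonneg[OF p_pos p_less_1] l
    by (intro add_mono mult_left_mono divide_right_mono) (auto simp: K_def holder_rate_ge(2))
  finally show ?thesis by (simp add: incr_bound_def K_def mult_ac)
qed

lemma incr_sum_bound_step_level_0_long:
  assumes IH: "\<And>j T s l. 0 < l \<Longrightarrow> finite T \<Longrightarrow> T \<subseteq> lattice j \<Longrightarrow> separated T l \<Longrightarrow>
      incr_sum G T s l \<le> incr_bound p n j l"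
    and l: "1/2 < l" and T: "finite T" "T \<subseteq> lattice 0" "separated T l"
  shows "incr_sum G T s l \<le> incr_bound p (Suc n) 0 l"
proof -
  define K where "K = holder_rate p ^ n"
  define r where "r = odds p"
  have coarse: "incr_sum G ((\<lambda>t. 4*t) ` T) (4 * s) (4*l) \<le> modulus p (4*l) + K * (1 / (2*(4*l)))"
    using IH[of "4*l" "(\<lambda>t. 4*t) ` T" 0 "4 * s"] l T lattice_0_times_4 separated_scale[OF T(3), of 4]
    by (simp add: incr_bound_def K_def)
  have same: "incr_sum G T s' l \<le> modulus p l + K * (1 / (2*l))" for s'
    using IH[of l T 0 s'] l T by (simp add: incr_bound_def K_def)
  have finer: "incr_sum G ((\<lambda>t. t/4) ` T) ((s-3)/4) (l/4) \<le> modulus p l + K * (r / (2*l))"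
    using IH[of "l/4" "(\<lambda>t. t/4) ` T" 1 "(s-3)/4"] l T lattice_div_4 separated_div_4
    by (simp add: incr_bound_def K_def r_def)
  have "incr_sum G T s l = (1-p)^2 * incr_sum G ((\<lambda>t. 4*t) ` T) (4 * s) (4*l)
     + p*(1-p) * incr_sum G T (s - 1/2) l + p*(1-p) * incr_sum G T (s - 1) l
     + p^2 * incr_sum G ((\<lambda>t. t/4) ` T) ((s-3)/4) (l/4)"
    by (rule incr_sum_two_step[OF T(1)])
  also have "\<dots> \<le> (1-p)^2 * (modulus p (4*l) + K * (1 / (2*(4*l))))
      + p*(1-p) * (modulus p l + K * (1 / (2*l))) + p*(1-p) * (modulus p l + K * (1 / (2*l)))
      + p^2 * (modulus p l + K * (r / (2*l)))"
    using coarse same finer p_pos p_less_1 by (intro add_mono mult_left_mono) auto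
  also have "\<dots> = ((1-p)^2 * modulus p (4*l) + 2*p*(1-p) * modulus p l + p^2 * modulus p l)
      + K * (((1-p)^2/4 + 3*p*(1-p)) / (2*l))"
    using l p_pos unfolding r_def odds_def by (simp add: field_simps power2_eq_square)
  also have "\<dots> \<le> modulus p l + K * (holder_rate p / (2*l))"
  proof (intro add_mono mult_left_mono divide_right_mono)
    have "(1-p)^2 * modulus p (4*l) \<le> (1-p)^2 * 1" by (intro mult_left_mono modulus_le_1) simp
    moreover have "modulus p l = 1" using l p_pos by (intro modulus_eq_1) auto
    moreover have "(1-p)^2 + 2*p*(1-p) + p^2 = 1" by (simp add: power2_eq_square algebra_simps)
    ultimately show "(1-p)^2 * modulus p (4*l) + 2*p*(1-p) * modulus p l + p^2 * modulus p l
        \<le> modulus p l" by simp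
  qed (use holder_rate_nonneg[OF p_pos p_less_1] holder_rate_ge(3) l in \<open>auto simp: K_def\<close>)
  finally show ?thesis by (simp add: incr_bound_def K_def mult_ac)
qed

lemma incr_sum_le_incr_bound:
  assumes "p \<le> 1/2" "0 < l" "finite T" "T \<subseteq> lattice j" "separated T l"
  shows "incr_sum G T s l \<le> incr_bound p n j l"
  using assms(2-)
proof (induction n arbitrary: j T s l)
  case 0
  then show ?case
    using incr_sum_le_1[OF mono_G nonneg le_1] incr_bound_0_ge_1[OF p_pos assms(1)]
    by (meson order_trans)
next
  case (Suc n)
  show ?case
  proof (cases j)
    case 0
    then show ?thesis
      using incr_sum_bound_step_level_0_short[OF Suc.IH] incr_sum_bound_step_level_0_long[OF Suc.IH]
        Suc.prems by (cases "l \<le> 1/2") auto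
  next
    case (Suc j')
    then show ?thesis using incr_sum_bound_step_Suc_level[OF Suc.IH] Suc.prems by blast
  qed
qed

lemma increment_le_modulus:
  assumes "p < 1/2" "0 < h"
  shows "G (s + h) - G s \<le> modulus p h"
proof -
  have "{0} \<subseteq> lattice 0" unfolding lattice_def by (auto intro!: exI[of _ 0])
  moreover have "separated {0} h" unfolding separated_def by simp
  ultimately have "G (s + h) - G s \<le> modulus p h + holder_rate p ^ n * (1 / (2*h))" for n
    using incr_sum_le_incr_bound[of h "{0}" 0 s n] assms by (simp add: incr_sum_def incr_bound_def)
  moreover have "(\<lambda>n. modulus p h + holder_rate p ^ n * (1 / (2*h))) \<longlonglongrightarrow> modulus p h + 0 * (1 / (2*h))"
    using holder_rate_less_1[OF p_pos assms(1)] holder_rate_nonneg[OF p_pos p_less_1]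
    by (intro tendsto_intros) simp
  ultimately show ?thesis by (intro LIMSEQ_le_const) auto
qed

end

section \<open>Ruin probabilities\<close>

lemma survival_fun_ruin:
  assumes "0 < p" "p < 1"
  shows "survival_fun (\<lambda>s. 1 - ruin (2 + s) p) p"
proof
  show "mono (\<lambda>s. 1 - ruin (2 + s) p)"
    by (rule monoI) (simp add: ruin_antimono)
  show "1 - ruin (2 + s) p = 0" if "s < 0" for s
    using ruin_eq_1_if_le_2[OF assms, of "2 + s"] that by simp
  show "1 - ruin (2 + s) p = (1-p) * (1 - ruin (2 + 2 * s) p) + p * (1 - ruin (2 + (s-1)/2) p)" for s
  proof (cases "s < 0")
    case True
    then show ?thesis using ruin_eq_1_if_le_2[OF assms] by simp
  next
    case False
    have args: "(2 + s + 1)/2 = 2 + (s-1)/2" "2*(2 + s) - 2 = 2 + 2 * s"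
      by (simp_all add: field_simps)
    have "ruin (2 + s) p = p * ruin (2 + (s-1)/2) p + (1-p) * ruin (2 + 2 * s) p"
      using ruin_first_step[of "2 + s" p] False assms unfolding args by simp
    then show ?thesis by (simp add: algebra_simps)
  qed
qed (use assms ruin_bounds in auto)

lemma ruin_strictly_decreasing:
  assumes "0 < p" "p < 1/2" "2 \<le> x" "0 < h"
  shows "ruin (x + h) p < ruin x p"
proof -
  interpret survival_fun "\<lambda>s. 1 - ruin (2 + s) p" p
    using survival_fun_ruin assms by simp
  obtain x1 where "ruin x1 p < 1" using ruin_less_1_somewhere assms by blast
  then have "0 < 1 - ruin (2 + (x1 - 2)) p" by simp
  from strict_mono_if_pos_somewhere[OF this, of "x - 2" h] assms show ?thesis by simp
qed

lemma ruin_increment_le_modulus: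
  assumes "0 < p" "p < 1/2" "0 < h"
  shows "ruin x p - ruin (x + h) p \<le> modulus p h"
proof -
  interpret survival_fun "\<lambda>s. 1 - ruin (2 + s) p" p
    using survival_fun_ruin assms by simp
  show ?thesis using increment_le_modulus[OF assms(2,3), of "x - 2"] by simp
qed

lemma ruin_log_asymptotics:
  assumes "0 < p" "p < 1/2"
  shows "((\<lambda>x. ln (ruin 2 p - ruin x p) / ln (x - 2)) \<longlongrightarrow> log (1/2) (1 - p)) (at_right 2)"
proof -
  interpret survival_fun "\<lambda>s. 1 - ruin (2 + s) p" p
    using survival_fun_ruin assms by simp
  have "ruin (2 + 1/2) p < ruin 2 p" using ruin_strictly_decreasing[of p 2 "1/2"] assms by simp
  then have "0 < 1 - ruin (2 + 1/2) p" using ruin_eq_1_if_le_2[of p 2] assms by simp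
  then have "((\<lambda>s. ln (1 - ruin (2 + s) p) / ln s) \<longlongrightarrow> log (1/2) (1 - p)) (at_right 0)"
    by (rule tendsto_ln_G_over_ln)
  moreover have "ruin 2 p = 1" using ruin_eq_1_if_le_2[of p 2] assms by simp
  ultimately show ?thesis by (simp add: filterlim_at_right_to_0[where a=2] add.commute)
qed

lemma ruin_increment_bounds:
  assumes p: "0 < p" "p < 1/2"
  shows "\<forall>x\<ge>2. \<forall>h>0. 0 < ruin x p - ruin (x + h) p \<and> ruin x p - ruin (x + h) p
      \<le> 2 / (1 - 2*p)^2 * (h powr (1/2 * p^2) + h powr (1/2 * (1 - 2*p)^3))"
proof (intro allI impI conjI)
  fix x h :: real
  assume "2 \<le> x" "0 < h"
  then show "0 < ruin x p - ruin (x + h) p"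
    using ruin_strictly_decreasing[of p x h] p by simp
  have "2 \<le> 2 / (1 - 2*p)^2"
    using p power_mono[of "1 - 2*p" 1 2] by (simp add: field_simps)
  then have "2 * h powr (p^2/2) \<le> 2 / (1 - 2*p)^2 * (h powr (1/2 * p^2) + h powr (1/2 * (1 - 2*p)^3))"
    by (rule mult_mono) auto
  then show "ruin x p - ruin (x + h) p
      \<le> 2 / (1 - 2*p)^2 * (h powr (1/2 * p^2) + h powr (1/2 * (1 - 2*p)^3))"
    using ruin_increment_le_modulus[of p h x] modulus_le_powr_square[of p h] p \<open>0 < h\<close> by simp
qed

theorem theorem1p5:
  shows "(\<exists>C>0. \<exists>\<beta>>0. \<forall>p. 0 < p \<and> p < 1/2 \<longrightarrow> (\<forall>x\<ge>2. \<forall>h>0.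
            0 < ruin x p - ruin (x + h) p \<and>
            ruin x p - ruin (x + h) p
              \<le> C / (1 - 2*p)^2 * (h powr (\<beta> * p^2) + h powr (\<beta> * (1 - 2*p)^3))))
       \<and> (\<forall>p. 0 < p \<and> p < 1/2 \<longrightarrow>
            ((\<lambda>x. ln (ruin 2 p - ruin x p) / ln (x - 2)) \<longlongrightarrow> log (1/2) (1 - p)) (at_right 2))"
proof -
  have "(0::real) < 2" "(0::real) < 1/2" by simp_all
  then show ?thesis using ruin_increment_bounds ruin_log_asymptotics by blast
qed

end
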